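(* Consider, in the Cartesian plane, two attackers $A1$, $A2$ and two targets $T1$, $T2$, each moving with constant speed along a straight line. The attackers have equal speed $v_{A1}=v_{A2}$, the targets have equal speed $v_{T1}=v_{T2}$, and the targets are slower than the attackers. The coordinate frame is chosen so that the $x$-axis is the line through the positions of $A1$ and $A2$ and the $y$-axis is the perpendicular bisector of the segment $\overline{A1A2}$; in particular $y_{A1}=y_{A2}=0$. Attacker $A1$ pursues $T1$ and $A2$ pursues $T2$, with $x_{T1}>0$ and $x_{T2}<0$. Let $\gamma_{A2T2}=v_{T2}/v_{A2}$ and let the $A2$–$T2$ Apollonius circle be the circle with center $$\left(\frac{x_{T2}-\gamma_{A2T2}^2x_{A2}}{1-\gamma_{A2T2}^2},\ \frac{y_{T2}}{1-\gamma_{A2T2}^2}\right)$$ and radius $$\frac{\gamma_{A2T2}\sqrt{(x_{T2}-x_{A2})^2+y_{T2}^2}}{1-\gamma_{A2T2}^2}.$$ Then the attacker $A1$ will collide with the attacker $A2$ only if the $A2$–$T2$ Apollonius circle intercepts the $y$-axis.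
   Context: This is a pursuit–evasion game between two targets and two attackers. Each attacker individually pursues its designated target, and the two targets cooperate to try to make the attackers collide with each other. The $A2$–$T2$ Apollonius circle is the locus of points that $A2$ and $T2$ can reach simultaneously when both move at constant speed in straight lines. The $y$-axis of the chosen frame is the locus of points that $A1$ and $A2$ can reach simultaneously. *)

theory Defs
  imports Complex_Main
begin

text \<open>Apollonius circle of an attacker at (xA, 0) and a target at (xT, yT),
  speed ratio gamma = vT / vA.\<close>

definition apollonius_cx :: "real \<Rightarrow> real \<Rightarrow> real \<Rightarrow> real" where
  "apollonius_cx \<gamma> xA xT = (xT - \<gamma>\<^sup>2 * xA) / (1 - \<gamma>\<^sup>2)"

definition apollonius_cy :: "real \<Rightarrow> real \<Rightarrow> real" where
  "apollonius_cy \<gamma> yT = yT / (1 - \<gamma>\<^sup>2)"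

definition apollonius_r :: "real \<Rightarrow> real \<Rightarrow> real \<Rightarrow> real \<Rightarrow> real" where
  "apollonius_r \<gamma> xA xT yT = \<gamma> * sqrt ((xT - xA)\<^sup>2 + yT\<^sup>2) / (1 - \<gamma>\<^sup>2)"

definition apollonius_meets_y_axis :: "real \<Rightarrow> real \<Rightarrow> real \<Rightarrow> real \<Rightarrow> bool" where
  "apollonius_meets_y_axis \<gamma> xA xT yT \<longleftrightarrow>
     (\<exists>y. (0 - apollonius_cx \<gamma> xA xT)\<^sup>2 + (y - apollonius_cy \<gamma> yT)\<^sup>2
            = (apollonius_r \<gamma> xA xT yT)\<^sup>2)"

end

theory Submission
  imports Defs
begin

text \<open>Equal-speed attackers starting symmetrically about the y-axis can only meet on it, so A2
  reaches the y-axis before capturing T2 and captures it at a point with x \<ge> 0.  The path of T2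
  up to the capture point lies in the A2-T2 Apollonius disk, because every point of it is reached
  by T2 no later than by A2.  Since T2 starts at x < 0, this path crosses the y-axis inside the
  disk, hence the circle meets the y-axis.\<close>

lemma apollonius_power_identity:
  fixes \<gamma> xA xT yT x y :: real
  assumes "\<gamma>\<^sup>2 \<noteq> 1"
  shows "(x - xT)\<^sup>2 + (y - yT)\<^sup>2 - \<gamma>\<^sup>2 * ((x - xA)\<^sup>2 + y\<^sup>2)
       = (1 - \<gamma>\<^sup>2) * ((x - apollonius_cx \<gamma> xA xT)\<^sup>2 + (y - apollonius_cy \<gamma> yT)\<^sup>2
                        - (apollonius_r \<gamma> xA xT yT)\<^sup>2)"
proof -
  define k where "k = 1 - \<gamma>\<^sup>2"
  have k: "k \<noteq> 0" using assms by (simp add: k_def)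
  have r2: "(apollonius_r \<gamma> xA xT yT)\<^sup>2 = \<gamma>\<^sup>2 * ((xT - xA)\<^sup>2 + yT\<^sup>2) / k\<^sup>2"
    by (simp add: apollonius_r_def k_def power_divide power_mult_distrib)
  have "k * ((x - apollonius_cx \<gamma> xA xT)\<^sup>2 + (y - apollonius_cy \<gamma> yT)\<^sup>2
             - (apollonius_r \<gamma> xA xT yT)\<^sup>2)
      = ((k * x - (xT - \<gamma>\<^sup>2 * xA))\<^sup>2 + (k * y - yT)\<^sup>2 - \<gamma>\<^sup>2 * ((xT - xA)\<^sup>2 + yT\<^sup>2)) / k"
    using k unfolding r2 apollonius_cx_def apollonius_cy_def k_def[symmetric]
    by (simp add: field_simps power2_eq_square)
  also have "\<dots> = (x - xT)\<^sup>2 + (y - yT)\<^sup>2 - \<gamma>\<^sup>2 * ((x - xA)\<^sup>2 + y\<^sup>2)"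
    using k by (simp add: k_def field_simps power2_eq_square)
  finally show ?thesis by (simp add: k_def)
qed

lemma apollonius_meets_y_axisI:
  assumes "(apollonius_cx \<gamma> xA xT)\<^sup>2 \<le> (apollonius_r \<gamma> xA xT yT)\<^sup>2"
  shows "apollonius_meets_y_axis \<gamma> xA xT yT"
proof -
  let ?cx = "apollonius_cx \<gamma> xA xT" and ?cy = "apollonius_cy \<gamma> yT"
    and ?r = "apollonius_r \<gamma> xA xT yT"
  have "(0 - ?cx)\<^sup>2 + (?cy + sqrt (?r\<^sup>2 - ?cx\<^sup>2) - ?cy)\<^sup>2 = ?r\<^sup>2"
    using assms by simp
  then show ?thesis unfolding apollonius_meets_y_axis_def by blast
qed

lemma apollonius_meets_y_axis_if_inside:
  fixes \<gamma> xA xT yT y :: real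
  assumes "\<gamma>\<^sup>2 < 1"
    and inside: "(0 - xT)\<^sup>2 + (y - yT)\<^sup>2 \<le> \<gamma>\<^sup>2 * ((0 - xA)\<^sup>2 + y\<^sup>2)"
  shows "apollonius_meets_y_axis \<gamma> xA xT yT"
proof -
  let ?cx = "apollonius_cx \<gamma> xA xT" and ?cy = "apollonius_cy \<gamma> yT"
    and ?r = "apollonius_r \<gamma> xA xT yT"
  have "(1 - \<gamma>\<^sup>2) * ((0 - ?cx)\<^sup>2 + (y - ?cy)\<^sup>2 - ?r\<^sup>2) \<le> 0"
    using inside apollonius_power_identity[of \<gamma> 0 xT y yT xA] assms by simp
  then have "(0 - ?cx)\<^sup>2 + (y - ?cy)\<^sup>2 \<le> ?r\<^sup>2"
    using assms by (simp add: mult_le_0_iff)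
  then show ?thesis
    by (intro apollonius_meets_y_axisI) (smt (verit) zero_le_power2 power2_minus)
qed

text \<open>Reverse triangle inequality at the capture point T + t b: A has covered t vA to get there,
  the target still has to cover (t - \<tau>) vT \<le> (t - \<tau>) vA from T + \<tau> b.\<close>

lemma target_path_in_apollonius_disk:
  fixes A T a b :: "'a::real_normed_vector"
  assumes "norm a = vA" "norm b = vT" "0 < vA" "vT \<le> vA"
    and "0 \<le> \<tau>" "\<tau> \<le> t"
    and capture: "A + t *\<^sub>R a = T + t *\<^sub>R b"
  shows "norm (T + \<tau> *\<^sub>R b - T) \<le> vT / vA * norm (T + \<tau> *\<^sub>R b - A)"
proof -
  let ?Q = "T + \<tau> *\<^sub>R b"
  have "t * vA = norm ((T + t *\<^sub>R b) - A)"
    using assms by (simp add: capture[symmetric])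
  also have "\<dots> \<le> norm ((T + t *\<^sub>R b) - ?Q) + norm (?Q - A)"
    by (rule norm_diff_triangle_le[OF order_refl order_refl])
  also have "norm ((T + t *\<^sub>R b) - ?Q) = (t - \<tau>) * vT"
    using assms by (simp add: algebra_simps flip: scaleR_diff_left)
  finally have "\<tau> * vA \<le> norm (?Q - A)"
    using assms mult_left_mono[of vT vA "t - \<tau>"] by (simp add: algebra_simps)
  then have "vT / vA * (\<tau> * vA) \<le> vT / vA * norm (?Q - A)"
    using assms by (intro mult_left_mono) auto
  moreover have "norm (?Q - T) = vT / vA * (\<tau> * vA)"
    using assms by simp
  ultimately show ?thesis
    by simp
qed

lemma equal_speed_meeting_point_on_y_axis:
  fixes xA a1x a1y a2x a2y vA t :: real
  assumes "xA \<noteq> 0"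
    and "a1x\<^sup>2 + a1y\<^sup>2 = vA\<^sup>2" "a2x\<^sup>2 + a2y\<^sup>2 = vA\<^sup>2"
    and meet: "- xA + t * a1x = xA + t * a2x" "t * a1y = t * a2y"
  shows "xA + t * a2x = 0"
proof -
  define x where "x = xA + t * a2x"
  have "x + xA = t * a1x"
    using meet(1) by (simp add: x_def)
  then have "(x + xA)\<^sup>2 + (t * a1y)\<^sup>2 = t\<^sup>2 * (a1x\<^sup>2 + a1y\<^sup>2)"
    by (simp add: power2_eq_square algebra_simps)
  also have "\<dots> = t\<^sup>2 * (a2x\<^sup>2 + a2y\<^sup>2)"
    using assms(2,3) by simp
  also have "\<dots> = (x - xA)\<^sup>2 + (t * a2y)\<^sup>2"
    by (simp add: x_def power2_eq_square algebra_simps)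
  finally have "(x + xA)\<^sup>2 = (x - xA)\<^sup>2"
    using meet(2) by simp
  then have "xA * x = 0"
    by (simp add: power2_eq_square algebra_simps)
  then show ?thesis
    using \<open>xA \<noteq> 0\<close> by (simp add: x_def)
qed

lemma attacker_captures_right_of_y_axis:
  fixes xA2 a1x a1y a2x a2y vA t t2 :: real
  assumes "xA2 < 0"
    and "a1x\<^sup>2 + a1y\<^sup>2 = vA\<^sup>2" "a2x\<^sup>2 + a2y\<^sup>2 = vA\<^sup>2"
    and "0 \<le> t" "t \<le> t2"
    and "- xA2 + t * a1x = xA2 + t * a2x" "t * a1y = t * a2y"
  shows "0 \<le> xA2 + t2 * a2x"
proof -
  have on_axis: "xA2 + t * a2x = 0"
    using assms by (intro equal_speed_meeting_point_on_y_axis[of xA2 a1x a1y vA a2x a2y]) auto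
  then have "0 < t * a2x"
    using \<open>xA2 < 0\<close> by linarith
  then have "0 < a2x"
    using \<open>0 \<le> t\<close> by (simp add: zero_less_mult_iff)
  moreover have "xA2 + t2 * a2x = (xA2 + t * a2x) + (t2 - t) * a2x"
    by (simp add: algebra_simps)
  ultimately show ?thesis
    using on_axis \<open>t \<le> t2\<close> by simp
qed

theorem lemma3:
  fixes xA1 xA2 xT1 yT1 xT2 yT2 vA vT :: real
    and a1x a1y a2x a2y b1x b1y b2x b2y :: real
    and t1 t2 t :: real
  assumes speeds: "0 < vA" "0 \<le> vT" "vT < vA"
    and frame: "xA1 = - xA2" "xA2 < 0"
    and targets: "xT1 > 0" "xT2 < 0"
    and vel_A1: "a1x\<^sup>2 + a1y\<^sup>2 = vA\<^sup>2"
    and vel_A2: "a2x\<^sup>2 + a2y\<^sup>2 = vA\<^sup>2"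
    and vel_T1: "b1x\<^sup>2 + b1y\<^sup>2 = vT\<^sup>2"
    and vel_T2: "b2x\<^sup>2 + b2y\<^sup>2 = vT\<^sup>2"
    and capture1: "0 < t1" "xA1 + t1 * a1x = xT1 + t1 * b1x" "0 + t1 * a1y = yT1 + t1 * b1y"
    and capture2: "0 < t2" "xA2 + t2 * a2x = xT2 + t2 * b2x" "0 + t2 * a2y = yT2 + t2 * b2y"
    and collision: "0 \<le> t" "t \<le> t1" "t \<le> t2"
       "xA1 + t * a1x = xA2 + t * a2x" "0 + t * a1y = 0 + t * a2y"
  shows "apollonius_meets_y_axis (vT / vA) xA2 xT2 yT2"
proof -
  have "0 \<le> xT2 + t2 * b2x"
    using attacker_captures_right_of_y_axis[of xA2 a1x a1y vA a2x a2y t t2]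
      frame vel_A1 vel_A2 collision capture2 by simp
  then have "0 < t2 * b2x"
    using targets by linarith
  then have "0 < b2x"
    using capture2(1) by (simp add: zero_less_mult_iff)
  define \<tau> where "\<tau> = - xT2 / b2x"
  have crossing: "xT2 + \<tau> * b2x = 0" and "0 \<le> \<tau>" "\<tau> \<le> t2"
    using \<open>0 < b2x\<close> \<open>0 \<le> xT2 + t2 * b2x\<close> targets by (auto simp: \<tau>_def field_simps)
  have slower: "(vT / vA)\<^sup>2 < 1"
    using speeds by (simp add: power_less_one_iff divide_less_eq)
  have norm_vel: "cmod (Complex a2x a2y) = vA" "cmod (Complex b2x b2y) = vT"
    using vel_A2 vel_T2 speeds by (simp_all add: complex_norm)
  define yQ where "yQ = yT2 + \<tau> * b2y"
  have Q: "Complex xT2 yT2 + \<tau> *\<^sub>R Complex b2x b2y = Complex 0 yQ"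
    using crossing by (simp add: yQ_def complex_eq_iff)
  have "cmod (Complex 0 yQ - Complex xT2 yT2) \<le> vT / vA * cmod (Complex 0 yQ - Complex xA2 0)"
    unfolding Q[symmetric] using capture2 speeds \<open>0 \<le> \<tau>\<close> \<open>\<tau> \<le> t2\<close>
    by (intro target_path_in_apollonius_disk[OF norm_vel, where t = t2])
       (auto simp: complex_eq_iff)
  then have "(cmod (Complex 0 yQ - Complex xT2 yT2))\<^sup>2
      \<le> (vT / vA)\<^sup>2 * (cmod (Complex 0 yQ - Complex xA2 0))\<^sup>2"
    by (metis norm_ge_zero power_mono power_mult_distrib)
  then have "(0 - xT2)\<^sup>2 + (yQ - yT2)\<^sup>2 \<le> (vT / vA)\<^sup>2 * ((0 - xA2)\<^sup>2 + yQ\<^sup>2)"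
    by (simp add: cmod_power2)
  with slower show ?thesis
    by (rule apollonius_meets_y_axis_if_inside)
qed

end
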